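(* Consider a feedforward rectifier network with input dimension $n_0$ and hidden layers $l \in \{1,\dots,L\}$ of widths $n_1,\dots,n_L$, where layer $l$ has weight matrix ${\bm W}^l \in \mathbb{R}^{n_l \times n_{l-1}}$ and bias ${\bm b}^l$, and neuron $i$ of layer $l$ computes $h_i^l = \max\{0, {\bm W}_i^l {\bm h}^{l-1} + {\bm b}_i^l\}$. Suppose each layer has been pruned so that each entry of ${\bm W}^l$ independently remains (is nonzero) with probability $p_l$ (the layer density) and is set to zero with probability $1-p_l$. Let $R(l,d)$ denote the expected (over the sparsity patterns) maximum number of linear regions that can be defined by layers $l, l+1, \dots, L$ when the dimension of the input to layer $l$ is $d$, and let $P(k \mid R, C, S)$ denote the probability that a weight matrix with $R$ rows, $C$ columns and probability $S$ of each element being nonzero has rank $k$. Then \[ R(L,d) \le \sum_{k=0}^{n_L} P(k \mid R = n_L, C = n_{L-1}, S = p_L) \sum_{j=0}^{\min\{k,d\}} \binom{n_L}{j}, \] and for $1 \le l \le L-1$, \[ R(l,d) \le \sum_{k=0}^{n_l} P(k \mid R = n_l, C = n_{l-1}, S = p_l) \sum_{j=0}^{\min\{k,d\}} \binom{n_l}{j}\, R\big(l+1, \min\{n_l - j, d, k\}\big). \]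
   Context: A linear region of a ReLU network is a maximal full-dimensional connected set of inputs on which the configuration of active neurons (those with ${\bm W}_i^l {\bm h}^{l-1} + {\bm b}_i^l > 0$) and inactive neurons (those with ${\bm W}_i^l {\bm h}^{l-1} + {\bm b}_i^l < 0$) is constant, so that the network acts as an affine function there; regions lying on activation hyperplanes (where some preactivation is exactly zero throughout) are not counted. Here ${\bm h}^0$ is the network input, ${\bm h}^l$ is the output of layer $l$, and ${\bm W}_i^l$ is the $i$-th row of ${\bm W}^l$. Every sparsity pattern of a given number of nonzeros is regarded as equally probable (random pruning). *)

theory Defs
  imports "HOL-Analysis.Analysis"
begin

text \<open>Widths: n :: nat \<Rightarrow> nat, n 0 is the input dimension, n l the width of
  hidden layer l (1 \<le> l \<le> L).  Weights: W l i j is entry (i,j) of the n l \<times> n (l-1) matrix W^l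
  (0-based row/column indices); b l i is the i-th bias of layer l.  Vectors are modelled as
  functions nat \<Rightarrow> real; only the first coordinates matter.  The space R^d is the set of
  vectors vanishing from coordinate d on, with the (product = Euclidean) topology.\<close>

definition Rd :: "nat \<Rightarrow> (nat \<Rightarrow> real) set" where
  "Rd d = {x. \<forall>i\<ge>d. x i = 0}"

definition preact :: "(nat \<Rightarrow> nat) \<Rightarrow> (nat \<Rightarrow> nat \<Rightarrow> nat \<Rightarrow> real) \<Rightarrow> (nat \<Rightarrow> nat \<Rightarrow> real)
    \<Rightarrow> nat \<Rightarrow> (nat \<Rightarrow> real) \<Rightarrow> nat \<Rightarrow> real" where
  "preact n W b l h i = (\<Sum>j<n (l - 1). W l i j * h j) + b l i"

definition layer :: "(nat \<Rightarrow> nat) \<Rightarrow> (nat \<Rightarrow> nat \<Rightarrow> nat \<Rightarrow> real) \<Rightarrow> (nat \<Rightarrow> nat \<Rightarrow> real)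
    \<Rightarrow> nat \<Rightarrow> (nat \<Rightarrow> real) \<Rightarrow> (nat \<Rightarrow> real)" where
  "layer n W b l h = (\<lambda>i. if i < n l then max 0 (preact n W b l h i) else 0)"

fun outp :: "(nat \<Rightarrow> nat) \<Rightarrow> (nat \<Rightarrow> nat \<Rightarrow> nat \<Rightarrow> real) \<Rightarrow> (nat \<Rightarrow> nat \<Rightarrow> real)
    \<Rightarrow> nat \<Rightarrow> (nat \<Rightarrow> real) \<Rightarrow> nat \<Rightarrow> (nat \<Rightarrow> real)" where
  "outp n W b l0 h 0 = h"
| "outp n W b l0 h (Suc t) = layer n W b (l0 + t) (outp n W b l0 h t)"

definition inmap :: "(nat \<Rightarrow> nat) \<Rightarrow> nat \<Rightarrow> nat \<Rightarrow> (nat \<Rightarrow> nat \<Rightarrow> real) \<Rightarrow> (nat \<Rightarrow> real)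
    \<Rightarrow> (nat \<Rightarrow> real) \<Rightarrow> (nat \<Rightarrow> real)" where
  "inmap n l0 d A c x = (\<lambda>i. if i < n (l0 - 1) then (\<Sum>j<d. A i j * x j) + c i else 0)"

definition config_set :: "(nat \<Rightarrow> nat) \<Rightarrow> nat \<Rightarrow> (nat \<Rightarrow> nat \<Rightarrow> nat \<Rightarrow> real) \<Rightarrow> (nat \<Rightarrow> nat \<Rightarrow> real)
    \<Rightarrow> nat \<Rightarrow> nat \<Rightarrow> (nat \<Rightarrow> nat \<Rightarrow> real) \<Rightarrow> (nat \<Rightarrow> real) \<Rightarrow> (nat \<Rightarrow> nat \<Rightarrow> bool)
    \<Rightarrow> (nat \<Rightarrow> real) set" where
  "config_set n L W b l0 d A c \<sigma> =
     {x \<in> Rd d. \<forall>m\<in>{l0..L}. \<forall>i<n m.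
        (let z = preact n W b m (outp n W b l0 (inmap n l0 d A c x) (m - l0)) i
         in if \<sigma> m i then z > 0 else z < 0)}"

definition full_dim :: "nat \<Rightarrow> (nat \<Rightarrow> real) set \<Rightarrow> bool" where
  "full_dim d C \<longleftrightarrow> (\<exists>U. openin (top_of_set (Rd d)) U \<and> U \<noteq> {} \<and> U \<subseteq> C)"

definition lin_regions :: "(nat \<Rightarrow> nat) \<Rightarrow> nat \<Rightarrow> (nat \<Rightarrow> nat \<Rightarrow> nat \<Rightarrow> real) \<Rightarrow> (nat \<Rightarrow> nat \<Rightarrow> real)
    \<Rightarrow> nat \<Rightarrow> nat \<Rightarrow> (nat \<Rightarrow> nat \<Rightarrow> real) \<Rightarrow> (nat \<Rightarrow> real) \<Rightarrow> (nat \<Rightarrow> real) set set" where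
  "lin_regions n L W b l0 d A c =
     {C. \<exists>\<sigma>. C \<in> components (config_set n L W b l0 d A c \<sigma>) \<and> full_dim d C}"

text \<open>Sparsity patterns: pat m is the set of positions (i,j) of layer m that are kept (nonzero).\<close>
definition supported :: "(nat \<Rightarrow> nat) \<Rightarrow> nat \<Rightarrow> nat \<Rightarrow> (nat \<Rightarrow> (nat \<times> nat) set)
    \<Rightarrow> (nat \<Rightarrow> nat \<Rightarrow> nat \<Rightarrow> real) \<Rightarrow> bool" where
  "supported n L l0 pat W \<longleftrightarrow>
     (\<forall>m\<in>{l0..L}. \<forall>i<n m. \<forall>j<n (m - 1). W m i j \<noteq> 0 \<longleftrightarrow> (i, j) \<in> pat m)"

text \<open>Maximum number of linear regions defined by layers l0..L, for fixed sparsity patterns,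
  when the input of layer l0 has dimension d (ranges over an affine image of R^d).\<close>
definition max_regions :: "(nat \<Rightarrow> nat) \<Rightarrow> nat \<Rightarrow> (nat \<Rightarrow> (nat \<times> nat) set) \<Rightarrow> nat \<Rightarrow> nat \<Rightarrow> real" where
  "max_regions n L pat l0 d =
     Sup {real (card (lin_regions n L W b l0 d A c)) | W b A c. supported n L l0 pat W}"

definition box :: "nat \<Rightarrow> nat \<Rightarrow> (nat \<times> nat) set" where
  "box R C = {..<R} \<times> {..<C}"

definition pat_prob :: "nat \<Rightarrow> nat \<Rightarrow> real \<Rightarrow> (nat \<times> nat) set \<Rightarrow> real" where
  "pat_prob R C S P = S ^ card P * (1 - S) ^ (R * C - card P)"

definition pat_space :: "(nat \<Rightarrow> nat) \<Rightarrow> nat \<Rightarrow> nat \<Rightarrow> (nat \<Rightarrow> (nat \<times> nat) set) set" where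
  "pat_space n L l0 = {pat. \<forall>m. (m \<in> {l0..L} \<longrightarrow> pat m \<subseteq> box (n m) (n (m - 1)))
                               \<and> (m \<notin> {l0..L} \<longrightarrow> pat m = {})}"

definition Rexp :: "(nat \<Rightarrow> nat) \<Rightarrow> nat \<Rightarrow> (nat \<Rightarrow> real) \<Rightarrow> nat \<Rightarrow> nat \<Rightarrow> real" where
  "Rexp n L p l0 d =
     (\<Sum>pat\<in>pat_space n L l0.
        (\<Prod>m\<in>{l0..L}. pat_prob (n m) (n (m - 1)) (p m) (pat m)) * max_regions n L pat l0 d)"

definition indep_rows :: "(nat \<Rightarrow> nat \<Rightarrow> real) \<Rightarrow> nat \<Rightarrow> nat set \<Rightarrow> bool" where
  "indep_rows M C I \<longleftrightarrow> (\<forall>a. (\<forall>j<C. (\<Sum>i\<in>I. a i * M i j) = 0) \<longrightarrow> (\<forall>i\<in>I. a i = 0))"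

definition mat_rank :: "(nat \<Rightarrow> nat \<Rightarrow> real) \<Rightarrow> nat \<Rightarrow> nat \<Rightarrow> nat" where
  "mat_rank M R C = Max {card I | I. I \<subseteq> {..<R} \<and> indep_rows M C I}"

text \<open>Rank of a matrix with sparsity pattern P and generic (almost surely) nonzero values:
  the maximal rank of a real matrix whose nonzero entries are exactly P.\<close>
definition pattern_rank :: "nat \<Rightarrow> nat \<Rightarrow> (nat \<times> nat) set \<Rightarrow> nat" where
  "pattern_rank R C P =
     Max {mat_rank M R C | M. \<forall>i<R. \<forall>j<C. M i j \<noteq> 0 \<longleftrightarrow> (i, j) \<in> P}"

definition prob_rank :: "nat \<Rightarrow> nat \<Rightarrow> nat \<Rightarrow> real \<Rightarrow> real" where
  "prob_rank k R C S =
     (\<Sum>P\<in>{P. P \<subseteq> box R C \<and> pattern_rank R C P = k}. pat_prob R C S P)"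

end

theory Submission
  imports Defs
begin

text \<open>Activation regions are convex, because along a segment inside one region every
  preactivation interpolates linearly, and they are relatively open; so the linear regions are
  exactly the nonempty activation regions. On an input of dimension d the preactivations of
  layer l are affine with linear part of rank at most k = rank W^l. Any min k d + 1 of them
  satisfy a linear relation whose value is constant, so the sets of neurons active on the
  cells of layer l shatter no set of more than min k d neurons, and Pajor's lemma leaves at
  most the sum of (n_l choose j) over j \<le> min k d cells. On a cell with j inactive neurons the
  layer output is affine with rank at most min (n_l - j) (min d k), so the later layers see an
  input of that dimension. The bound decreases in j, hence it is largest when the cells fill the
  levels j = 0, 1, ... in order. Taking the supremum over weights with a given sparsity pattern
  and then the expectation over the patterns, grouped by their generic rank, gives the two
  recursive bounds.\<close>

section \<open>Shattering and Pajor's lemma\<close>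

definition shatters :: "'a set set \<Rightarrow> 'a set \<Rightarrow> bool" where
  "shatters F S \<longleftrightarrow> (\<forall>T\<subseteq>S. \<exists>B\<in>F. B \<inter> S = T)"

lemma shatters_if_shatters_Un_traces:
  assumes "x \<notin> S" and sh: "shatters ({B\<in>F. x \<notin> B} \<union> (\<lambda>B. B - {x}) ` {B\<in>F. x \<in> B}) S"
  shows "shatters F S"
  unfolding shatters_def
proof (intro allI impI)
  fix T assume "T \<subseteq> S"
  obtain B where B: "B \<in> {B\<in>F. x \<notin> B} \<union> (\<lambda>B. B - {x}) ` {B\<in>F. x \<in> B}" "B \<inter> S = T"
    using sh[unfolded shatters_def, rule_format, OF \<open>T \<subseteq> S\<close>] ..
  from B(1) obtain B' where "B' \<in> F" "B = B' \<or> B = B' - {x}" by blast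
  with B(2) \<open>x \<notin> S\<close> show "\<exists>B\<in>F. B \<inter> S = T" by blast
qed

lemma shatters_insert_if_shatters_Int_traces:
  assumes "x \<notin> S" and sh: "shatters ({B\<in>F. x \<notin> B} \<inter> (\<lambda>B. B - {x}) ` {B\<in>F. x \<in> B}) S"
  shows "shatters F (insert x S)"
  unfolding shatters_def
proof (intro allI impI)
  fix T assume T: "T \<subseteq> insert x S"
  then have "T - {x} \<subseteq> S" by blast
  obtain B where B: "B \<in> {B\<in>F. x \<notin> B} \<inter> (\<lambda>B. B - {x}) ` {B\<in>F. x \<in> B}" "B \<inter> S = T - {x}"
    using sh[unfolded shatters_def, rule_format, OF \<open>T - {x} \<subseteq> S\<close>] ..
  then have "B \<in> F" "x \<notin> B" by simp_all
  from B(1) obtain B' where "B' \<in> F" "x \<in> B'" "B = B' - {x}" by auto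
  then have "insert x B \<in> F" by (simp add: insert_absorb)
  show "\<exists>B\<in>F. B \<inter> insert x S = T"
  proof (cases "x \<in> T")
    case True
    with B(2) T have "insert x B \<inter> insert x S = T" by blast
    with \<open>insert x B \<in> F\<close> show ?thesis by blast
  next
    case False
    with B(2) \<open>x \<notin> B\<close> have "B \<inter> insert x S = T" by blast
    with \<open>B \<in> F\<close> show ?thesis by blast
  qed
qed

lemma card_shattered_traces_le:
  fixes F :: "'a set set"
  assumes "finite X" "x \<notin> X"
  defines "F0 \<equiv> {B\<in>F. x \<notin> B}" and "F1 \<equiv> (\<lambda>B. B - {x}) ` {B\<in>F. x \<in> B}"
  shows "card {S. S \<subseteq> X \<and> shatters (F0 \<union> F1) S} + card {S. S \<subseteq> X \<and> shatters (F0 \<inter> F1) S}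
    \<le> card {S. S \<subseteq> insert x X \<and> shatters F S}"
proof -
  let ?Sh = "\<lambda>G. {S. S \<subseteq> X \<and> shatters G S}"
  have "inj_on (insert x) (?Sh (F0 \<inter> F1))"
  proof (rule inj_onI)
    fix S S' assume "S \<in> ?Sh (F0 \<inter> F1)" "S' \<in> ?Sh (F0 \<inter> F1)" "insert x S = insert x S'"
    with assms(2) show "S = S'" by (metis Diff_insert_absorb mem_Collect_eq subsetD)
  qed
  moreover have "?Sh (F0 \<union> F1) \<inter> insert x ` ?Sh (F0 \<inter> F1) = {}" using assms(2) by auto
  ultimately have "card (?Sh (F0 \<union> F1)) + card (?Sh (F0 \<inter> F1))
      = card (?Sh (F0 \<union> F1) \<union> insert x ` ?Sh (F0 \<inter> F1))"
    using assms(1) by (simp add: card_Un_disjoint card_image)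
  also have "\<dots> \<le> card {S. S \<subseteq> insert x X \<and> shatters F S}"
  proof (rule card_mono)
    have "S \<in> {S. S \<subseteq> insert x X \<and> shatters F S}" if "S \<in> ?Sh (F0 \<union> F1)" for S
      using that assms(2) shatters_if_shatters_Un_traces[of x S F] unfolding F0_def F1_def by auto
    moreover have "insert x S \<in> {S. S \<subseteq> insert x X \<and> shatters F S}" if "S \<in> ?Sh (F0 \<inter> F1)" for S
      using that assms(2) shatters_insert_if_shatters_Int_traces[of x S F] unfolding F0_def F1_def
      by auto
    ultimately show "?Sh (F0 \<union> F1) \<union> insert x ` ?Sh (F0 \<inter> F1) \<subseteq> {S. S \<subseteq> insert x X \<and> shatters F S}"
      by blast
  qed (use assms(1) in auto)
  finally show ?thesis .
qed

text \<open>Pajor's lemma. In the induction step F splits into the members F0 avoiding x and the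
  traces F1 of those containing x, and card F = card (F0 \<union> F1) + card (F0 \<inter> F1).\<close>
lemma card_le_card_shattered:
  assumes "finite X" "F \<subseteq> Pow X"
  shows "card F \<le> card {S. S \<subseteq> X \<and> shatters F S}"
  using assms
proof (induction X arbitrary: F rule: finite_induct)
  case empty
  then have "F \<subseteq> {{}}" by auto
  then have "card F \<le> 1" using card_mono[of "{{}}" F] by auto
  moreover have "F \<noteq> {} \<Longrightarrow> {S. S \<subseteq> {} \<and> shatters F S} = {{}}"
    unfolding shatters_def by auto
  ultimately show ?case by (cases "F = {}") auto
next
  case (insert x X)
  define F0 where "F0 = {B\<in>F. x \<notin> B}"
  define F1 where "F1 = (\<lambda>B. B - {x}) ` {B\<in>F. x \<in> B}"
  have finF: "finite F" using insert(1,4) by (meson finite_Pow_iff finite_insert rev_finite_subset)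
  have F01: "F0 \<subseteq> Pow X" "F1 \<subseteq> Pow X" using insert(4) unfolding F0_def F1_def by auto
  have "card F = card F0 + card {B\<in>F. x \<in> B}"
  proof -
    have "F = F0 \<union> {B\<in>F. x \<in> B}" "F0 \<inter> {B\<in>F. x \<in> B} = {}" unfolding F0_def by auto
    with finF show ?thesis by (metis card_Un_disjoint finite_Un)
  qed
  also have "card {B\<in>F. x \<in> B} = card F1"
    unfolding F1_def by (rule card_image[symmetric]) (rule inj_onI, blast)
  also have "card F0 + card F1 = card (F0 \<union> F1) + card (F0 \<inter> F1)"
    using card_Un_Int[of F0 F1] finF unfolding F0_def F1_def by auto
  also have "\<dots> \<le> card {S. S \<subseteq> X \<and> shatters (F0 \<union> F1) S} + card {S. S \<subseteq> X \<and> shatters (F0 \<inter> F1) S}"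
    using F01 by (intro add_mono insert.IH) auto
  also have "\<dots> \<le> card {S. S \<subseteq> insert x X \<and> shatters F S}"
    unfolding F0_def F1_def using insert(1,2) by (rule card_shattered_traces_le)
  finally show ?case .
qed

lemma card_subsets_card_le:
  "card {S. S \<subseteq> {..<(N::nat)} \<and> card S \<le> R} = (\<Sum>j = 0..R. N choose j)"
proof -
  have "{S. S \<subseteq> {..<N} \<and> card S \<le> R} = (\<Union>j\<in>{0..R}. {S. S \<subseteq> {..<N} \<and> card S = j})" by auto
  then show ?thesis by (simp only:) (subst card_UN_disjoint, auto simp: n_subsets)
qed


section \<open>A rearrangement inequality\<close>

lemma sum_low_levels_eq:
  fixes f :: "nat \<Rightarrow> real"
  assumes "finite F"
  shows "(\<Sum>\<sigma>\<in>{\<sigma>\<in>F. level \<sigma> \<le> R}. f (level \<sigma>)) = (\<Sum>j = 0..R. real (card {\<sigma>\<in>F. level \<sigma> = j}) * f j)"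
proof -
  have "(\<Sum>\<sigma>\<in>{\<sigma>\<in>F. level \<sigma> \<le> R}. f (level \<sigma>))
      = (\<Sum>j = 0..R. \<Sum>\<sigma>\<in>{\<sigma>\<in>{\<sigma>\<in>F. level \<sigma> \<le> R}. level \<sigma> = j}. f (level \<sigma>))"
    using assms by (intro sum.group[symmetric]) auto
  also have "\<dots> = (\<Sum>j = 0..R. real (card {\<sigma>\<in>F. level \<sigma> = j}) * f j)"
  proof (intro sum.cong refl)
    fix j assume "j \<in> {0..R}"
    then have "{\<sigma>\<in>{\<sigma>\<in>F. level \<sigma> \<le> R}. level \<sigma> = j} = {\<sigma>\<in>F. level \<sigma> = j}" by auto
    then show "(\<Sum>\<sigma>\<in>{\<sigma>\<in>{\<sigma>\<in>F. level \<sigma> \<le> R}. level \<sigma> = j}. f (level \<sigma>))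
        = real (card {\<sigma>\<in>F. level \<sigma> = j}) * f j" by simp
  qed
  finally show ?thesis .
qed

text \<open>The sum of an antitone weight over F is largest when F fills the lowest levels.\<close>
lemma sum_antimono_levels_le:
  fixes h :: "nat \<Rightarrow> real" and level :: "'a \<Rightarrow> nat"
  assumes fin: "finite F"
    and level_card: "\<And>j. card {\<sigma>\<in>F. level \<sigma> = j} \<le> bb j"
    and card_F: "card F \<le> (\<Sum>j = 0..R. bb j)"
    and antimono: "\<And>i j. i \<le> j \<Longrightarrow> h j \<le> h i"
    and "h R \<ge> 0"
  shows "(\<Sum>\<sigma>\<in>F. h (level \<sigma>)) \<le> (\<Sum>j = 0..R. real (bb j) * h j)"
proof -
  define F1 where "F1 = {\<sigma>\<in>F. level \<sigma> \<le> R}"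
  define F2 where "F2 = {\<sigma>\<in>F. \<not> level \<sigma> \<le> R}"
  define c where "c = (\<lambda>j. real (card {\<sigma>\<in>F. level \<sigma> = j}))"
  have fin12: "finite F1" "finite F2" using fin unfolding F1_def F2_def by auto
  have F12: "F = F1 \<union> F2" "F1 \<inter> F2 = {}" unfolding F1_def F2_def by auto
  have sum_F1: "(\<Sum>\<sigma>\<in>F1. f (level \<sigma>)) = (\<Sum>j = 0..R. c j * f j)" for f
    unfolding F1_def c_def using fin by (rule sum_low_levels_eq)
  have "real (card F2) = real (card F) - real (card F1)"
    using F12 fin12 card_Un_disjoint[of F1 F2] by simp
  also have "\<dots> \<le> (\<Sum>j = 0..R. real (bb j) - c j)"
    using sum_F1[of "\<lambda>_. 1"] card_F by (simp add: sum_subtractf flip: of_nat_sum of_nat_le_iff)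
  finally have card_F2: "real (card F2) \<le> (\<Sum>j = 0..R. real (bb j) - c j)" .
  have "(\<Sum>\<sigma>\<in>F2. h (level \<sigma>)) \<le> real (card F2) * h R"
    using sum_mono[of F2 "\<lambda>\<sigma>. h (level \<sigma>)" "\<lambda>_. h R"] antimono by (simp add: F2_def)
  also have "\<dots> \<le> (\<Sum>j = 0..R. real (bb j) - c j) * h R"
    using card_F2 \<open>h R \<ge> 0\<close> by (rule mult_right_mono)
  also have "\<dots> \<le> (\<Sum>j = 0..R. (real (bb j) - c j) * h j)"
    unfolding sum_distrib_right
    using level_card antimono by (intro sum_mono mult_left_mono) (auto simp: c_def)
  finally have "(\<Sum>\<sigma>\<in>F. h (level \<sigma>)) \<le> (\<Sum>j = 0..R. c j * h j) + (\<Sum>j = 0..R. (real (bb j) - c j) * h j)"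
    using F12 fin12 sum_F1[of h] by (simp add: sum.union_disjoint)
  also have "\<dots> = (\<Sum>j = 0..R. real (bb j) * h j)"
    by (simp add: sum.distrib[symmetric] algebra_simps)
  finally show ?thesis .
qed

section \<open>Linear dependence and rank\<close>

lemma nontrivial_relation_if_card_gt:
  fixes v :: "'a \<Rightarrow> nat \<Rightarrow> real"
  assumes "finite S" "card S > d"
  shows "\<exists>a. (\<forall>t<d. (\<Sum>i\<in>S. a i * v i t) = 0) \<and> (\<exists>i\<in>S. a i \<noteq> 0)"
  using assms
proof (induction d arbitrary: S v)
  case 0
  then obtain i where "i \<in> S" by fastforce
  then show ?case by (intro exI[of _ "\<lambda>_. 1"]) auto
next
  case (Suc d)
  show ?case
  proof (cases "\<forall>i\<in>S. v i d = 0")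
    case True
    obtain a where rel: "\<forall>t<d. (\<Sum>i\<in>S. a i * v i t) = 0" "\<exists>i\<in>S. a i \<noteq> 0"
      using Suc.IH[of S v] Suc.prems by auto
    with True have "\<forall>t<Suc d. (\<Sum>i\<in>S. a i * v i t) = 0" by (auto simp: less_Suc_eq)
    with rel(2) show ?thesis by blast
  next
    case False
    then obtain i0 where i0: "i0 \<in> S" "v i0 d \<noteq> 0" by auto
    define S' where "S' = S - {i0}"
    \<comment> \<open>Gaussian elimination: clear coordinate d of all other vectors using v i0.\<close>
    define v' where "v' = (\<lambda>i t. v i t - (v i d / v i0 d) * v i0 t)"
    have S': "finite S'" "card S' > d" using Suc.prems i0 unfolding S'_def by auto
    obtain \<mu> where \<mu>: "\<forall>t<d. (\<Sum>i\<in>S'. \<mu> i * v' i t) = 0" "\<exists>i\<in>S'. \<mu> i \<noteq> 0"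
      using Suc.IH[OF S'] by blast
    define K where "K = (\<Sum>i\<in>S'. \<mu> i * v i d / v i0 d)"
    have S: "S = insert i0 S'" "i0 \<notin> S'" using i0 unfolding S'_def by auto
    have "(\<Sum>i\<in>S. (\<mu>(i0 := - K)) i * v i t) = (\<Sum>i\<in>S'. \<mu> i * v' i t)" for t
    proof -
      have "(\<Sum>i\<in>S'. \<mu> i * v i t) = (\<Sum>i\<in>S'. \<mu> i * v' i t + (\<mu> i * v i d / v i0 d) * v i0 t)"
        unfolding v'_def by (intro sum.cong) (auto simp: algebra_simps)
      also have "\<dots> = (\<Sum>i\<in>S'. \<mu> i * v' i t) + K * v i0 t"
        unfolding K_def by (simp add: sum.distrib sum_distrib_right)
      moreover have "(\<Sum>i\<in>S'. (\<mu>(i0 := - K)) i * v i t) = (\<Sum>i\<in>S'. \<mu> i * v i t)"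
        using S(2) by (intro sum.cong) auto
      ultimately show ?thesis using S S' by simp
    qed
    moreover have "v' i d = 0" for i unfolding v'_def using i0 by auto
    ultimately have "\<forall>t<Suc d. (\<Sum>i\<in>S. (\<mu>(i0 := - K)) i * v i t) = 0"
      using \<mu>(1) by (auto simp: less_Suc_eq)
    moreover have "\<exists>i\<in>S. (\<mu>(i0 := - K)) i \<noteq> 0" using \<mu>(2) S by auto
    ultimately show ?thesis by blast
  qed
qed

lemma finite_indep_row_cards: "finite {card I | I. I \<subseteq> {..<R} \<and> indep_rows M C I}"
  by (rule finite_subset[of _ "card ` Pow {..<R}"]) auto

lemma card_le_mat_rank: "I \<subseteq> {..<R} \<Longrightarrow> indep_rows M C I \<Longrightarrow> card I \<le> mat_rank M R C"
  unfolding mat_rank_def by (rule Max_ge[OF finite_indep_row_cards]) auto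

lemma mat_rank_attained: "\<exists>I. I \<subseteq> {..<R} \<and> indep_rows M C I \<and> card I = mat_rank M R C"
proof -
  have "indep_rows M C {}" unfolding indep_rows_def by auto
  then have "mat_rank M R C \<in> {card I | I. I \<subseteq> {..<R} \<and> indep_rows M C I}"
    unfolding mat_rank_def using finite_indep_row_cards by (intro Max_in) auto
  then show ?thesis by auto
qed

lemma mat_rank_le_rows: "mat_rank M R C \<le> R"
proof -
  obtain I where "I \<subseteq> {..<R}" "card I = mat_rank M R C" using mat_rank_attained by blast
  then show ?thesis using card_mono[of "{..<R}" I] by auto
qed

lemma mat_rank_le_pattern_rank:
  assumes "\<forall>i<R. \<forall>j<C. M i j \<noteq> 0 \<longleftrightarrow> (i, j) \<in> P"
  shows "mat_rank M R C \<le> pattern_rank R C P"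
  unfolding pattern_rank_def using assms
  by (intro Max_ge[OF finite_subset[of _ "{..R}"]]) (auto simp: mat_rank_le_rows)

lemma pattern_rank_le_rows: "pattern_rank R C P \<le> R"
proof -
  let ?M = "\<lambda>i j. if (i, j) \<in> P then 1 else (0::real)"
  have "pattern_rank R C P \<in> {mat_rank M R C | M. \<forall>i<R. \<forall>j<C. M i j \<noteq> 0 \<longleftrightarrow> (i, j) \<in> P}"
    unfolding pattern_rank_def
    by (intro Max_in[OF finite_subset[of _ "{..R}"]]) (auto simp: mat_rank_le_rows intro!: exI[of _ ?M])
  then show ?thesis using mat_rank_le_rows by auto
qed

lemma row_in_span_of_maximal_indep:
  assumes "finite I" "i \<notin> I" "indep_rows M C I" "\<not> indep_rows M C (insert i I)"
  shows "\<exists>\<gamma>. \<forall>j<C. M i j = (\<Sum>t\<in>I. \<gamma> t * M t j)"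
proof -
  obtain a where a: "\<forall>j<C. (\<Sum>t\<in>insert i I. a t * M t j) = 0" "\<exists>t\<in>insert i I. a t \<noteq> 0"
    using assms(4) unfolding indep_rows_def by blast
  have sum_a: "(\<Sum>t\<in>insert i I. a t * M t j) = a i * M i j + (\<Sum>t\<in>I. a t * M t j)" for j
    using assms(1,2) by simp
  have "a i \<noteq> 0"
  proof
    assume "a i = 0"
    then have "\<forall>j<C. (\<Sum>t\<in>I. a t * M t j) = 0" using a(1) sum_a by simp
    then have "\<forall>t\<in>I. a t = 0" using assms(3) unfolding indep_rows_def by blast
    with a(2) \<open>a i = 0\<close> show False by auto
  qed
  have "M i j = (\<Sum>t\<in>I. - a t / a i * M t j)" if "j < C" for j
  proof -
    have "a i * M i j = - (\<Sum>t\<in>I. a t * M t j)" using a(1) sum_a that by (simp add: eq_neg_iff_add_eq_0)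
    moreover have "a i * (\<Sum>t\<in>I. - a t / a i * M t j) = (\<Sum>t\<in>I. - (a t * M t j))"
      unfolding sum_distrib_left using \<open>a i \<noteq> 0\<close> by (intro sum.cong refl) (simp add: field_simps)
    ultimately have "a i * M i j = a i * (\<Sum>t\<in>I. - a t / a i * M t j)" by (simp add: sum_negf)
    with \<open>a i \<noteq> 0\<close> show ?thesis by simp
  qed
  then show ?thesis by (intro exI[of _ "\<lambda>t. - a t / a i"]) simp
qed

lemma rank_many_rows_span:
  "\<exists>I \<Gamma>. I \<subseteq> {..<R} \<and> card I = mat_rank M R C \<and>
      (\<forall>i<R. \<forall>j<C. M i j = (\<Sum>t\<in>I. \<Gamma> i t * M t j))"
proof -
  obtain I where I: "I \<subseteq> {..<R}" "indep_rows M C I" "card I = mat_rank M R C"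
    using mat_rank_attained by blast
  have finI: "finite I" using I(1) finite_subset by blast
  have "\<exists>\<gamma>. \<forall>j<C. M i j = (\<Sum>t\<in>I. \<gamma> t * M t j)" if i: "i \<in> {..<R}" for i
  proof (cases "i \<in> I")
    case True
    have "(\<Sum>t\<in>I. (if t = i then 1 else 0) * M t j) = M i j" for j
    proof -
      have "(\<Sum>t\<in>I. (if t = i then 1 else 0) * M t j) = (\<Sum>t\<in>I. if t = i then M t j else 0)"
        by (rule sum.cong) auto
      with True finI show ?thesis by (simp add: sum.delta')
    qed
    then show ?thesis by (intro exI[of _ "\<lambda>t. if t = i then 1 else 0"]) simp
  next
    case False
    have "\<not> indep_rows M C (insert i I)"
    proof
      assume "indep_rows M C (insert i I)"
      then have "card (insert i I) \<le> mat_rank M R C" using I(1) i by (intro card_le_mat_rank) auto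
      with False finI I(3) show False by simp
    qed
    with finI False I(2) show ?thesis by (rule row_in_span_of_maximal_indep)
  qed
  then have "\<exists>\<Gamma>. \<forall>i\<in>{..<R}. \<forall>j<C. M i j = (\<Sum>t\<in>I. \<Gamma> i t * M t j)"
    by (intro bchoice ballI)
  with I show ?thesis unfolding Ball_def lessThan_iff by blast
qed

section \<open>Activation regions\<close>

text \<open>Functions of type nat \<Rightarrow> real are not a real vector space instance in the library,
  so convex combinations are written out.\<close>
definition convex_comb :: "real \<Rightarrow> (nat \<Rightarrow> real) \<Rightarrow> (nat \<Rightarrow> real) \<Rightarrow> nat \<Rightarrow> real" where
  "convex_comb s x y = (\<lambda>i. (1 - s) * x i + s * y i)"

lemma sum_mult_convex_comb:
  "(\<Sum>j\<in>J. a j * convex_comb s x y j) = (1 - s) * (\<Sum>j\<in>J. a j * x j) + s * (\<Sum>j\<in>J. a j * y j)"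
  unfolding convex_comb_def sum_distrib_left sum.distrib[symmetric]
  by (rule sum.cong) (auto simp: algebra_simps)

lemma inmap_convex_comb:
  "inmap n l0 d A c (convex_comb s x y) = convex_comb s (inmap n l0 d A c x) (inmap n l0 d A c y)"
  unfolding inmap_def sum_mult_convex_comb by (auto simp: convex_comb_def algebra_simps)

lemma preact_convex_comb:
  "preact n W b m (convex_comb s x y) i = (1 - s) * preact n W b m x i + s * preact n W b m y i"
  unfolding preact_def sum_mult_convex_comb by (simp add: algebra_simps)

lemma convex_comb_pos:
  assumes "0 \<le> s" "s \<le> 1" "(u::real) > 0" "v > 0"
  shows "(1 - s) * u + s * v > 0"
proof (cases "s = 0")
  case False
  with assms have "s * v > 0" "(1 - s) * u \<ge> 0" by auto
  then show ?thesis by linarith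
qed (use assms in auto)

lemma convex_comb_neg:
  assumes "0 \<le> s" "s \<le> 1" "(u::real) < 0" "v < 0"
  shows "(1 - s) * u + s * v < 0"
  using convex_comb_pos[OF assms(1,2), of "-u" "-v"] assms by (simp add: algebra_simps)

lemma relu_convex_comb_same_sign:
  assumes "0 \<le> s" "s \<le> 1" "(u > 0 \<and> v > 0) \<or> (u < 0 \<and> v < 0)"
  shows "max 0 ((1 - s) * u + s * v) = (1 - s) * max 0 u + s * max 0 (v::real)"
  using assms convex_comb_pos[OF assms(1,2)] convex_comb_neg[OF assms(1,2)] by auto

abbreviation has_activation :: "bool \<Rightarrow> real \<Rightarrow> bool" where
  "has_activation a z \<equiv> (if a then z > 0 else z < 0)"

lemma config_setD:
  assumes "x \<in> config_set n L W b l0 d A c \<sigma>" "m \<in> {l0..L}" "i < n m"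
  shows "has_activation (\<sigma> m i) (preact n W b m (outp n W b l0 (inmap n l0 d A c x) (m - l0)) i)"
  using assms unfolding config_set_def by (auto simp: Let_def)

lemma outp_convex_comb:
  assumes x: "x \<in> config_set n L W b l0 d A c \<sigma>" and y: "y \<in> config_set n L W b l0 d A c \<sigma>"
    and s: "0 \<le> s" "s \<le> 1" and t: "l0 + t \<le> Suc L"
  shows "outp n W b l0 (inmap n l0 d A c (convex_comb s x y)) t
     = convex_comb s (outp n W b l0 (inmap n l0 d A c x) t) (outp n W b l0 (inmap n l0 d A c y) t)"
  using t
proof (induction t)
  case 0
  then show ?case by (simp add: inmap_convex_comb)
next
  case (Suc t)
  let ?hx = "outp n W b l0 (inmap n l0 d A c x) t"
  let ?hy = "outp n W b l0 (inmap n l0 d A c y) t"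
  have m: "l0 + t \<in> {l0..L}" using Suc.prems by auto
  have "(preact n W b (l0 + t) ?hx i > 0 \<and> preact n W b (l0 + t) ?hy i > 0) \<or>
        (preact n W b (l0 + t) ?hx i < 0 \<and> preact n W b (l0 + t) ?hy i < 0)"
    if "i < n (l0 + t)" for i
    using config_setD[OF x m that] config_setD[OF y m that] by (auto split: if_splits)
  with Suc show ?case
    by (auto simp: layer_def convex_comb_def preact_convex_comb[unfolded convex_comb_def]
        relu_convex_comb_same_sign[OF s])
qed

lemma config_set_convex_comb:
  assumes x: "x \<in> config_set n L W b l0 d A c \<sigma>" and y: "y \<in> config_set n L W b l0 d A c \<sigma>"
    and s: "0 \<le> s" "s \<le> 1"
  shows "convex_comb s x y \<in> config_set n L W b l0 d A c \<sigma>"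
proof -
  have "convex_comb s x y \<in> Rd d"
    using x y unfolding config_set_def Rd_def convex_comb_def by auto
  moreover have "has_activation (\<sigma> m i)
      (preact n W b m (outp n W b l0 (inmap n l0 d A c (convex_comb s x y)) (m - l0)) i)"
    if m: "m \<in> {l0..L}" and i: "i < n m" for m i
    using outp_convex_comb[OF x y s, of "m - l0"] m config_setD[OF x m i] config_setD[OF y m i] s
    by (auto simp: preact_convex_comb convex_comb_pos convex_comb_neg split: if_splits)
  ultimately show ?thesis unfolding config_set_def by (simp add: Let_def)
qed

lemma connected_config_set: "connected (config_set n L W b l0 d A c \<sigma>)"
proof -
  let ?S = "config_set n L W b l0 d A c \<sigma>"
  have "path_connected ?S"
    unfolding path_connected_def
  proof (intro ballI)
    fix x y assume x: "x \<in> ?S" and y: "y \<in> ?S"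
    let ?g = "\<lambda>s. convex_comb s x y"
    have "path ?g"
      unfolding path_def convex_comb_def
      by (intro continuous_on_coordinatewise_then_product continuous_intros)
    moreover have "path_image ?g \<subseteq> ?S"
      unfolding path_image_def using config_set_convex_comb[OF x y] by auto
    moreover have "pathstart ?g = x" "pathfinish ?g = y"
      unfolding pathstart_def pathfinish_def convex_comb_def by auto
    ultimately show "\<exists>g. path g \<and> path_image g \<subseteq> ?S \<and> pathstart g = x \<and> pathfinish g = y"
      by blast
  qed
  then show ?thesis by (rule path_connected_imp_connected)
qed

lemma continuous_on_preact_outp:
  "continuous_on UNIV (\<lambda>x. preact n W b m (outp n W b l0 (inmap n l0 d A c x) t) i)"
proof -
  have "continuous_on UNIV (\<lambda>x. outp n W b l0 (inmap n l0 d A c x) t i)" for i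
  proof (induction t arbitrary: i)
    case 0
    then show ?case unfolding inmap_def by (cases "i < n (l0 - 1)") (auto intro!: continuous_intros)
  next
    case (Suc t)
    show ?case unfolding outp.simps layer_def preact_def
      by (cases "i < n (l0 + t)") (auto intro!: continuous_intros Suc)
  qed
  then show ?thesis unfolding preact_def by (auto intro!: continuous_intros)
qed

lemma openin_config_set: "openin (top_of_set (Rd d)) (config_set n L W b l0 d A c \<sigma>)"
proof -
  let ?z = "\<lambda>m i x. preact n W b m (outp n W b l0 (inmap n l0 d A c x) (m - l0)) i"
  define T where "T = (\<Inter>m\<in>{l0..L}. \<Inter>i\<in>{..<n m}. {x. has_activation (\<sigma> m i) (?z m i x)})"
  have open_half: "open {x. has_activation (\<sigma> m i) (?z m i x)}" for m i
    by (cases "\<sigma> m i") (auto intro!: open_Collect_less continuous_on_preact_outp continuous_intros)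
  have "open T" unfolding T_def by (intro open_INT finite_atLeastAtMost finite_lessThan ballI open_half)
  moreover have "config_set n L W b l0 d A c \<sigma> = Rd d \<inter> T"
    unfolding config_set_def T_def by (auto simp: Let_def)
  ultimately show ?thesis by auto
qed

text \<open>Configurations are normalized to be False outside the neurons of layers l0..L, so that
  distinct realized configurations have distinct activation regions.\<close>
definition normal_configs :: "(nat \<Rightarrow> nat) \<Rightarrow> nat \<Rightarrow> nat \<Rightarrow> (nat \<Rightarrow> nat \<Rightarrow> bool) set" where
  "normal_configs n L l0 = {\<tau>. \<forall>m i. \<tau> m i \<longrightarrow> m \<in> {l0..L} \<and> i < n m}"

definition realized_configs :: "(nat \<Rightarrow> nat) \<Rightarrow> nat \<Rightarrow> (nat \<Rightarrow> nat \<Rightarrow> nat \<Rightarrow> real)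
    \<Rightarrow> (nat \<Rightarrow> nat \<Rightarrow> real) \<Rightarrow> nat \<Rightarrow> nat \<Rightarrow> (nat \<Rightarrow> nat \<Rightarrow> real) \<Rightarrow> (nat \<Rightarrow> real)
    \<Rightarrow> (nat \<Rightarrow> nat \<Rightarrow> bool) set" where
  "realized_configs n L W b l0 d A c =
     {\<tau> \<in> normal_configs n L l0. config_set n L W b l0 d A c \<tau> \<noteq> {}}"

lemma config_set_normalize:
  "config_set n L W b l0 d A c \<sigma> =
   config_set n L W b l0 d A c (\<lambda>m i. m \<in> {l0..L} \<and> i < n m \<and> \<sigma> m i)"
  unfolding config_set_def by (auto simp: Let_def)

lemma finite_normal_configs: "finite (normal_configs n L l0)"
proof -
  have "normal_configs n L l0 \<subseteq> (\<lambda>T m i. (m, i) \<in> T) ` Pow (SIGMA m:{l0..L}. {..<n m})"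
  proof
    fix \<tau> assume "\<tau> \<in> normal_configs n L l0"
    then have "\<tau> = (\<lambda>m i. (m, i) \<in> {(m, i). \<tau> m i})"
      and "{(m, i). \<tau> m i} \<in> Pow (SIGMA m:{l0..L}. {..<n m})"
      unfolding normal_configs_def by auto
    then show "\<tau> \<in> (\<lambda>T m i. (m, i) \<in> T) ` Pow (SIGMA m:{l0..L}. {..<n m})" by blast
  qed
  then show ?thesis by (rule finite_subset) auto
qed

lemma finite_realized_configs: "finite (realized_configs n L W b l0 d A c)"
  unfolding realized_configs_def using finite_normal_configs by auto

lemma lin_regions_eq_config_sets:
  "lin_regions n L W b l0 d A c = config_set n L W b l0 d A c ` realized_configs n L W b l0 d A c"
proof (intro equalityI subsetI)
  fix C assume "C \<in> lin_regions n L W b l0 d A c"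
  then obtain \<sigma> where C: "C \<in> components (config_set n L W b l0 d A c \<sigma>)"
    unfolding lin_regions_def by auto
  let ?\<tau> = "\<lambda>m i. m \<in> {l0..L} \<and> i < n m \<and> \<sigma> m i"
  have ne: "config_set n L W b l0 d A c \<sigma> \<noteq> {}" using C by auto
  then have "components (config_set n L W b l0 d A c \<sigma>) = {config_set n L W b l0 d A c \<sigma>}"
    by (simp add: components_eq_sing_iff connected_config_set)
  with C have "C = config_set n L W b l0 d A c \<sigma>" by simp
  then have "C = config_set n L W b l0 d A c ?\<tau>" by (simp only: config_set_normalize[symmetric])
  moreover have "?\<tau> \<in> realized_configs n L W b l0 d A c"
    unfolding realized_configs_def normal_configs_def
    using ne config_set_normalize[of n L W b l0 d A c \<sigma>] by auto
  ultimately show "C \<in> config_set n L W b l0 d A c ` realized_configs n L W b l0 d A c" by blast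
next
  fix C assume "C \<in> config_set n L W b l0 d A c ` realized_configs n L W b l0 d A c"
  then obtain \<tau> where "\<tau> \<in> realized_configs n L W b l0 d A c" and C: "C = config_set n L W b l0 d A c \<tau>"
    by auto
  then have ne: "C \<noteq> {}" unfolding realized_configs_def by auto
  have "components C = {C}" using ne C by (simp add: components_eq_sing_iff connected_config_set)
  moreover have "full_dim d C"
    unfolding full_dim_def using C ne openin_config_set[of d n L W b l0 A c \<tau>] by blast
  ultimately show "C \<in> lin_regions n L W b l0 d A c" unfolding lin_regions_def using C by auto
qed

lemma inj_on_config_set: "inj_on (config_set n L W b l0 d A c) (realized_configs n L W b l0 d A c)"
proof (rule inj_onI)
  fix \<tau>1 \<tau>2
  assume t1: "\<tau>1 \<in> realized_configs n L W b l0 d A c" and t2: "\<tau>2 \<in> realized_configs n L W b l0 d A c"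
    and eq: "config_set n L W b l0 d A c \<tau>1 = config_set n L W b l0 d A c \<tau>2"
  obtain x where x1: "x \<in> config_set n L W b l0 d A c \<tau>1" using t1 unfolding realized_configs_def by auto
  with eq have x2: "x \<in> config_set n L W b l0 d A c \<tau>2" by simp
  have "\<tau>1 m i = \<tau>2 m i" for m i
  proof (cases "m \<in> {l0..L} \<and> i < n m")
    case True
    then show ?thesis using config_setD[OF x1, of m i] config_setD[OF x2, of m i] by (auto split: if_splits)
  next
    case False
    then show ?thesis using t1 t2 unfolding realized_configs_def normal_configs_def by auto
  qed
  then show "\<tau>1 = \<tau>2" by blast
qed

lemma card_lin_regions:
  "card (lin_regions n L W b l0 d A c) = card (realized_configs n L W b l0 d A c)"
  unfolding lin_regions_eq_config_sets using inj_on_config_set by (rule card_image)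

section \<open>The cells of one layer\<close>

definition layer_cell :: "(nat \<Rightarrow> nat) \<Rightarrow> (nat \<Rightarrow> nat \<Rightarrow> nat \<Rightarrow> real) \<Rightarrow> (nat \<Rightarrow> nat \<Rightarrow> real)
    \<Rightarrow> nat \<Rightarrow> nat \<Rightarrow> (nat \<Rightarrow> nat \<Rightarrow> real) \<Rightarrow> (nat \<Rightarrow> real) \<Rightarrow> (nat \<Rightarrow> bool) \<Rightarrow> (nat \<Rightarrow> real) set" where
  "layer_cell n W b l d A c \<sigma> =
     {x \<in> Rd d. \<forall>i<n l. has_activation (\<sigma> i) (preact n W b l (inmap n l d A c x) i)}"

definition cell_patterns :: "(nat \<Rightarrow> nat) \<Rightarrow> (nat \<Rightarrow> nat \<Rightarrow> nat \<Rightarrow> real) \<Rightarrow> (nat \<Rightarrow> nat \<Rightarrow> real)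
    \<Rightarrow> nat \<Rightarrow> nat \<Rightarrow> (nat \<Rightarrow> nat \<Rightarrow> real) \<Rightarrow> (nat \<Rightarrow> real) \<Rightarrow> (nat \<Rightarrow> bool) set" where
  "cell_patterns n W b l d A c = {\<sigma>. (\<forall>i. \<sigma> i \<longrightarrow> i < n l) \<and> layer_cell n W b l d A c \<sigma> \<noteq> {}}"

lemma finite_cell_patterns: "finite (cell_patterns n W b l d A c)"
proof -
  have "cell_patterns n W b l d A c \<subseteq> (\<lambda>S i. i \<in> S) ` Pow {..<n l}"
  proof
    fix \<sigma> assume "\<sigma> \<in> cell_patterns n W b l d A c"
    then have "\<sigma> = (\<lambda>i. i \<in> {i. \<sigma> i})" "{i. \<sigma> i} \<in> Pow {..<n l}" unfolding cell_patterns_def by auto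
    then show "\<sigma> \<in> (\<lambda>S i. i \<in> S) ` Pow {..<n l}" by blast
  qed
  then show ?thesis by (rule finite_subset) auto
qed

definition affine_coeff :: "(nat \<Rightarrow> nat) \<Rightarrow> (nat \<Rightarrow> nat \<Rightarrow> nat \<Rightarrow> real) \<Rightarrow> nat
    \<Rightarrow> (nat \<Rightarrow> nat \<Rightarrow> real) \<Rightarrow> nat \<Rightarrow> nat \<Rightarrow> real" where
  "affine_coeff n W l A i t = (\<Sum>j<n (l - 1). W l i j * A j t)"

definition affine_offset :: "(nat \<Rightarrow> nat) \<Rightarrow> (nat \<Rightarrow> nat \<Rightarrow> nat \<Rightarrow> real) \<Rightarrow> (nat \<Rightarrow> nat \<Rightarrow> real)
    \<Rightarrow> nat \<Rightarrow> (nat \<Rightarrow> real) \<Rightarrow> nat \<Rightarrow> real" where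
  "affine_offset n W b l c i = (\<Sum>j<n (l - 1). W l i j * c j) + b l i"

lemma preact_inmap_affine:
  "preact n W b l (inmap n l d A c x) i = (\<Sum>t<d. affine_coeff n W l A i t * x t) + affine_offset n W b l c i"
proof -
  have "preact n W b l (inmap n l d A c x) i
      = (\<Sum>j<n (l - 1). \<Sum>t<d. W l i j * A j t * x t) + affine_offset n W b l c i"
    unfolding preact_def inmap_def affine_offset_def
    by (simp add: algebra_simps sum.distrib sum_distrib_left)
  also have "(\<Sum>j<n (l - 1). \<Sum>t<d. W l i j * A j t * x t) = (\<Sum>t<d. affine_coeff n W l A i t * x t)"
    unfolding affine_coeff_def by (subst sum.swap) (simp add: sum_distrib_right)
  finally show ?thesis .
qed

lemma affine_coeff_rows_dependent:
  assumes S: "S \<subseteq> {..<n l}" "card S > min k d"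
    and k: "mat_rank (W l) (n l) (n (l - 1)) \<le> k"
  shows "\<exists>a. (\<forall>t<d. (\<Sum>i\<in>S. a i * affine_coeff n W l A i t) = 0) \<and> (\<exists>i\<in>S. a i \<noteq> 0)"
proof (cases "card S > k")
  case True
  have "\<not> indep_rows (W l) (n (l - 1)) S"
  proof
    assume "indep_rows (W l) (n (l - 1)) S"
    with S(1) have "card S \<le> mat_rank (W l) (n l) (n (l - 1))" by (rule card_le_mat_rank)
    with k True show False by simp
  qed
  then obtain a where a: "\<forall>j<n (l - 1). (\<Sum>i\<in>S. a i * W l i j) = 0" "\<exists>i\<in>S. a i \<noteq> 0"
    unfolding indep_rows_def by blast
  have "(\<Sum>i\<in>S. a i * affine_coeff n W l A i t) = (\<Sum>j<n (l - 1). (\<Sum>i\<in>S. a i * W l i j) * A j t)" for t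
    unfolding affine_coeff_def
    by (simp add: sum_distrib_left sum_distrib_right sum.swap[of _ S] algebra_simps)
  with a show ?thesis by auto
next
  case False
  with S have "finite S" "card S > d" by (auto intro: finite_subset)
  then show ?thesis by (rule nontrivial_relation_if_card_gt)
qed

lemma sum_relation_preact_inmap:
  assumes "\<forall>t<d. (\<Sum>i\<in>S. a i * affine_coeff n W l A i t) = 0"
  shows "(\<Sum>i\<in>S. a i * preact n W b l (inmap n l d A c x) i) = (\<Sum>i\<in>S. a i * affine_offset n W b l c i)"
proof -
  have "(\<Sum>i\<in>S. a i * preact n W b l (inmap n l d A c x) i)
      = (\<Sum>t<d. (\<Sum>i\<in>S. a i * affine_coeff n W l A i t) * x t) + (\<Sum>i\<in>S. a i * affine_offset n W b l c i)"
    unfolding preact_inmap_affine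
    by (simp add: algebra_simps sum.distrib sum_distrib_left sum_distrib_right sum.swap[of _ S])
  with assms show ?thesis by simp
qed

lemma cell_patterns_not_shatter:
  assumes S: "S \<subseteq> {..<n l}" "card S > min k d"
    and k: "mat_rank (W l) (n l) (n (l - 1)) \<le> k"
  shows "\<not> shatters ((\<lambda>\<sigma>. {i. \<sigma> i}) ` cell_patterns n W b l d A c) S"
proof
  assume sh: "shatters ((\<lambda>\<sigma>. {i. \<sigma> i}) ` cell_patterns n W b l d A c) S"
  obtain a0 where a0: "\<forall>t<d. (\<Sum>i\<in>S. a0 i * affine_coeff n W l A i t) = 0" "\<exists>i\<in>S. a0 i \<noteq> 0"
    using affine_coeff_rows_dependent[where n = n and l = l and W = W and A = A, OF S k] by blast
  define K0 where "K0 = (\<Sum>i\<in>S. a0 i * affine_offset n W b l c i)"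
  define a where "a = (if K0 \<ge> 0 then a0 else (\<lambda>i. - a0 i))"
  have rel: "\<forall>t<d. (\<Sum>i\<in>S. a i * affine_coeff n W l A i t) = 0" "\<exists>i\<in>S. a i \<noteq> 0"
    and const_nonneg: "(\<Sum>i\<in>S. a i * affine_offset n W b l c i) \<ge> 0"
    using a0 K0_def unfolding a_def by (cases "K0 \<ge> 0"; auto simp: sum_negf)+
  \<comment> \<open>On the cell activating exactly the neurons of S with negative coefficient, every term of
    the relation is nonpositive and one is negative.\<close>
  obtain \<sigma> where \<sigma>: "\<sigma> \<in> cell_patterns n W b l d A c" "{i. \<sigma> i} \<inter> S = {i\<in>S. a i < 0}"
    using sh unfolding shatters_def by (metis (no_types, lifting) imageE mem_Collect_eq subsetI)
  then obtain x where x: "x \<in> layer_cell n W b l d A c \<sigma>" unfolding cell_patterns_def by auto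
  let ?z = "\<lambda>i. preact n W b l (inmap n l d A c x) i"
  have z: "has_activation (\<sigma> i) (?z i)" "\<sigma> i \<longleftrightarrow> a i < 0" if "i \<in> S" for i
    using x that S(1) \<sigma>(2) unfolding layer_cell_def by auto
  have "(\<Sum>i\<in>S. a i * ?z i) < 0"
  proof (rule sum_strict_mono_ex1[of S _ "\<lambda>_. 0", simplified])
    show "finite S" using S(1) finite_subset by blast
    have sign: "if a i < 0 then ?z i > 0 else ?z i < 0" if "i \<in> S" for i
      using z[OF that] by simp
    show "\<forall>i\<in>S. a i * ?z i \<le> 0"
      using sign by (fastforce simp: mult_le_0_iff split: if_splits)
    show "\<exists>i\<in>S. a i * ?z i < 0"
      using sign rel(2) by (fastforce simp: mult_less_0_iff split: if_splits)
  qed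
  with sum_relation_preact_inmap[OF rel(1)] const_nonneg show False by simp
qed

lemma card_cell_patterns_le:
  assumes "mat_rank (W l) (n l) (n (l - 1)) \<le> k"
  shows "card (cell_patterns n W b l d A c) \<le> (\<Sum>j = 0..min k d. n l choose j)"
proof -
  let ?F = "(\<lambda>\<sigma>. {i. \<sigma> i}) ` cell_patterns n W b l d A c"
  have "inj_on (\<lambda>\<sigma>. {i. \<sigma> i}) (cell_patterns n W b l d A c)"
    by (rule inj_onI) (auto simp: fun_eq_iff)
  then have "card (cell_patterns n W b l d A c) = card ?F" by (simp add: card_image)
  also have "\<dots> \<le> card {S. S \<subseteq> {..<n l} \<and> shatters ?F S}"
    by (rule card_le_card_shattered) (auto simp: cell_patterns_def)
  also have "\<dots> \<le> card {S. S \<subseteq> {..<n l} \<and> card S \<le> min k d}"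
    using cell_patterns_not_shatter[where n = n and l = l and W = W and b = b and d = d and A = A and c = c, OF _ _ assms] by (intro card_mono) (auto simp: not_less[symmetric])
  also have "\<dots> = (\<Sum>j = 0..min k d. n l choose j)" by (rule card_subsets_card_le)
  finally show ?thesis .
qed

section \<open>The output of one layer on a cell\<close>

definition factors_affinely :: "(nat \<Rightarrow> nat) \<Rightarrow> nat \<Rightarrow> nat \<Rightarrow> ((nat \<Rightarrow> real) \<Rightarrow> nat \<Rightarrow> real) \<Rightarrow> bool" where
  "factors_affinely n l m f \<longleftrightarrow> (\<exists>A c. \<forall>x. \<exists>y\<in>Rd m. f x = inmap n l m A c y)"

lemma factors_affinely_sum:
  fixes u :: "'q \<Rightarrow> (nat \<Rightarrow> real) \<Rightarrow> real"
  assumes "finite Q" "card Q \<le> m"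
  shows "factors_affinely n (Suc l) m (\<lambda>x i. if i < n l then (\<Sum>q\<in>Q. M i q * u q x) + c i else 0)"
proof -
  obtain e where e: "bij_betw e {0..<card Q} Q" using ex_bij_betw_nat_finite[OF assms(1)] by blast
  define A where "A = (\<lambda>i s. if s < card Q then M i (e s) else 0)"
  define y where "y = (\<lambda>x s. if s < card Q then u (e s) x else 0)"
  have "(\<Sum>j<m. A i j * y x j) = (\<Sum>s\<in>{0..<card Q}. M i (e s) * u (e s) x)" for i x
    using assms(2) unfolding A_def y_def by (intro sum.mono_neutral_cong_right) auto
  also have "\<dots> i x = (\<Sum>q\<in>Q. M i q * u q x)" for i x
    using sum.reindex_bij_betw[OF e, of "\<lambda>q. M i q * u q x"] by simp
  finally have "(\<lambda>i. if i < n l then (\<Sum>q\<in>Q. M i q * u q x) + c i else 0) = inmap n (Suc l) m A c (y x)"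
    for x by (auto simp: inmap_def)
  moreover have "y x \<in> Rd m" for x unfolding y_def Rd_def using assms(2) by auto
  ultimately show ?thesis unfolding factors_affinely_def by blast
qed

definition cell_output :: "(nat \<Rightarrow> nat) \<Rightarrow> (nat \<Rightarrow> nat \<Rightarrow> nat \<Rightarrow> real) \<Rightarrow> (nat \<Rightarrow> nat \<Rightarrow> real)
    \<Rightarrow> nat \<Rightarrow> nat \<Rightarrow> (nat \<Rightarrow> nat \<Rightarrow> real) \<Rightarrow> (nat \<Rightarrow> real) \<Rightarrow> (nat \<Rightarrow> bool) \<Rightarrow> (nat \<Rightarrow> real) \<Rightarrow> nat \<Rightarrow> real" where
  "cell_output n W b l d A c \<sigma> x = (\<lambda>i. if i < n l \<and> \<sigma> i then preact n W b l (inmap n l d A c x) i else 0)"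

lemma cell_output_factors_input_dim:
  assumes "d \<le> m"
  shows "factors_affinely n (Suc l) m (cell_output n W b l d A c \<sigma>)"
proof -
  have eq: "cell_output n W b l d A c \<sigma> = (\<lambda>x i. if i < n l then
      (\<Sum>t\<in>{..<d}. (if \<sigma> i then affine_coeff n W l A i t else 0) * x t)
        + (if \<sigma> i then affine_offset n W b l c i else 0) else 0)"
    unfolding cell_output_def by (auto simp: preact_inmap_affine fun_eq_iff)
  show ?thesis unfolding eq by (rule factors_affinely_sum) (use assms in auto)
qed

lemma cell_output_factors_active:
  assumes "finite {i. \<sigma> i}" "card {i. \<sigma> i} \<le> m"
  shows "factors_affinely n (Suc l) m (cell_output n W b l d A c \<sigma>)"
proof -
  let ?z = "\<lambda>x q. preact n W b l (inmap n l d A c x) q"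
  have "(\<Sum>q\<in>{i. \<sigma> i}. (if i = q then 1 else 0) * ?z x q) = (if \<sigma> i then ?z x i else 0)" for x i
  proof -
    have "(\<Sum>q\<in>{i. \<sigma> i}. (if i = q then 1 else 0) * ?z x q) = (\<Sum>q\<in>{i. \<sigma> i}. if i = q then ?z x q else 0)"
      by (rule sum.cong) auto
    with assms(1) show ?thesis by (simp add: sum.delta)
  qed
  then have eq: "cell_output n W b l d A c \<sigma> = (\<lambda>x i. if i < n l then
      (\<Sum>q\<in>{i. \<sigma> i}. (if i = q then 1 else 0) * ?z x q) + 0 else 0)"
    unfolding cell_output_def by (auto simp: fun_eq_iff)
  show ?thesis unfolding eq by (rule factors_affinely_sum) (use assms in auto)
qed

lemma preact_eq_sum_basis_preact:
  assumes "\<forall>j<n (l - 1). W l i j = (\<Sum>t\<in>I. \<gamma> t * W l t j)"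
  shows "preact n W b l h i = (\<Sum>q\<in>I. \<gamma> q * (preact n W b l h q - b l q)) + b l i"
proof -
  have "preact n W b l h i = (\<Sum>j<n (l - 1). (\<Sum>t\<in>I. \<gamma> t * W l t j) * h j) + b l i"
    unfolding preact_def using assms by (intro arg_cong2[where f = "(+)"] sum.cong) auto
  also have "\<dots> = (\<Sum>t\<in>I. \<gamma> t * (\<Sum>j<n (l - 1). W l t j * h j)) + b l i"
    by (simp add: sum_distrib_left sum_distrib_right sum.swap[of _ I] mult.assoc)
  finally show ?thesis unfolding preact_def by simp
qed

text \<open>The output depends on the input only through the preactivations of rank many basis
  rows.\<close>
lemma cell_output_factors_rank:
  assumes "mat_rank (W l) (n l) (n (l - 1)) \<le> m"
  shows "factors_affinely n (Suc l) m (cell_output n W b l d A c \<sigma>)"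
proof -
  obtain I \<Gamma> where I: "I \<subseteq> {..<n l}" "card I = mat_rank (W l) (n l) (n (l - 1))"
    and \<Gamma>: "\<forall>i<n l. \<forall>j<n (l - 1). W l i j = (\<Sum>t\<in>I. \<Gamma> i t * W l t j)"
    using rank_many_rows_span[of "n l" "W l" "n (l - 1)"] by blast
  let ?z = "\<lambda>x q. preact n W b l (inmap n l d A c x) q"
  have eq: "cell_output n W b l d A c \<sigma> = (\<lambda>x i. if i < n l then
      (\<Sum>q\<in>I. (if \<sigma> i then \<Gamma> i q else 0) * (?z x q - b l q)) + (if \<sigma> i then b l i else 0) else 0)"
  proof (intro ext)
    fix x i
    show "cell_output n W b l d A c \<sigma> x i = (if i < n l then
        (\<Sum>q\<in>I. (if \<sigma> i then \<Gamma> i q else 0) * (?z x q - b l q)) + (if \<sigma> i then b l i else 0) else 0)"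
    proof (cases "i < n l")
      case True
      with \<Gamma> have "\<forall>j<n (l - 1). W l i j = (\<Sum>t\<in>I. \<Gamma> i t * W l t j)" by blast
      from preact_eq_sum_basis_preact[where n = n and W = W and l = l and i = i and I = I
          and \<gamma> = "\<Gamma> i" and b = b and h = "inmap n l d A c x", OF this] True
      show ?thesis by (simp add: cell_output_def)
    qed (simp add: cell_output_def)
  qed
  have "finite I" using I(1) finite_subset by blast
  with I(2) assms show ?thesis unfolding eq by (intro factors_affinely_sum) auto
qed

lemma cell_output_factors:
  assumes "mat_rank (W l) (n l) (n (l - 1)) \<le> k" "finite {i. \<sigma> i}"
  shows "factors_affinely n (Suc l) (min (card {i. \<sigma> i}) (min d k)) (cell_output n W b l d A c \<sigma>)"
proof -
  let ?m = "min (card {i. \<sigma> i}) (min d k)"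
  consider "card {i. \<sigma> i} \<le> ?m" | "d \<le> ?m" | "k \<le> ?m" by linarith
  then show ?thesis
  proof cases
    case 1
    with assms(2) show ?thesis by (rule cell_output_factors_active)
  next
    case 2
    then show ?thesis by (rule cell_output_factors_input_dim)
  next
    case 3
    with assms(1) show ?thesis by (intro cell_output_factors_rank) simp
  qed
qed

section \<open>Regions counted cell by cell\<close>

lemma outp_Suc_shift: "outp n W b l0 h (Suc t) = outp n W b (Suc l0) (layer n W b l0 h) t"
  by (induction t) auto

lemma layer_cell_of_config_set:
  assumes "l \<le> L" "x \<in> config_set n L W b l d A c \<tau>"
  shows "x \<in> layer_cell n W b l d A c (\<tau> l)"
proof -
  have "has_activation (\<tau> l i) (preact n W b l (inmap n l d A c x) i)" if "i < n l" for i
    using config_setD[OF assms(2), of l i] assms(1) that by (simp split: if_splits)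
  moreover have "x \<in> Rd d" using assms(2) unfolding config_set_def by blast
  ultimately show ?thesis unfolding layer_cell_def by blast
qed

lemma layer_eq_cell_output:
  assumes "l \<le> L" "x \<in> config_set n L W b l d A c \<tau>"
  shows "layer n W b l (inmap n l d A c x) = cell_output n W b l d A c (\<tau> l) x"
  using layer_cell_of_config_set[OF assms]
  by (auto simp: layer_def cell_output_def layer_cell_def fun_eq_iff split: if_splits)

lemma realized_config_in_cell_patterns:
  assumes "l \<le> L" "\<tau> \<in> realized_configs n L W b l d A c"
  shows "\<tau> l \<in> cell_patterns n W b l d A c"
proof -
  from assms(2) obtain x where "x \<in> config_set n L W b l d A c \<tau>"
    unfolding realized_configs_def by blast
  with assms show ?thesis
    using layer_cell_of_config_set unfolding cell_patterns_def realized_configs_def normal_configs_def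
    by blast
qed

lemma card_realized_configs_last:
  "card (realized_configs n L W b L d A c) \<le> card (cell_patterns n W b L d A c)"
proof (rule card_inj_on_le[of "\<lambda>\<tau>. \<tau> L"])
  show "inj_on (\<lambda>\<tau>. \<tau> L) (realized_configs n L W b L d A c)"
    by (rule inj_onI) (auto simp: realized_configs_def normal_configs_def fun_eq_iff)
  show "(\<lambda>\<tau>. \<tau> L) ` realized_configs n L W b L d A c \<subseteq> cell_patterns n W b L d A c"
    using realized_config_in_cell_patterns[of L L] by blast
qed (rule finite_cell_patterns)

lemma config_set_shift:
  assumes "l < L" "x \<in> config_set n L W b l d A c \<tau>" "y \<in> Rd m"
    and "layer n W b l (inmap n l d A c x) = inmap n (Suc l) m A' c' y"
  shows "y \<in> config_set n L W b (Suc l) m A' c' (\<tau>(l := \<lambda>_. False))"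
proof -
  have "has_activation ((\<tau>(l := \<lambda>_. False)) k i)
      (preact n W b k (outp n W b (Suc l) (inmap n (Suc l) m A' c' y) (k - Suc l)) i)"
    if k: "k \<in> {Suc l..L}" and i: "i < n k" for k i
  proof -
    have "outp n W b l (inmap n l d A c x) (k - l) = outp n W b (Suc l) (inmap n (Suc l) m A' c' y) (k - Suc l)"
    proof -
      have "k - l = Suc (k - Suc l)" using k by auto
      then show ?thesis by (simp only: outp_Suc_shift assms(4))
    qed
    with config_setD[OF assms(2), of k i] k i show ?thesis by (auto split: if_splits)
  qed
  with assms(3) show ?thesis unfolding config_set_def by (simp add: Let_def)
qed

lemma fun_upd_in_normal_configs_Suc:
  assumes "\<tau> \<in> normal_configs n L l"
  shows "\<tau>(l := \<lambda>_. False) \<in> normal_configs n L (Suc l)"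
  unfolding normal_configs_def
proof (intro CollectI allI impI)
  fix k i assume "(\<tau>(l := \<lambda>_. False)) k i"
  then have "k \<noteq> l" "\<tau> k i" by (auto split: if_splits)
  with assms show "k \<in> {Suc l..L} \<and> i < n k" unfolding normal_configs_def by fastforce
qed

lemma card_realized_configs_fiber_le:
  assumes "l < L" and factors: "\<And>x. \<exists>y\<in>Rd m. cell_output n W b l d A c \<sigma> x = inmap n (Suc l) m A' c' y"
  shows "card {\<tau> \<in> realized_configs n L W b l d A c. \<tau> l = \<sigma>}
    \<le> card (realized_configs n L W b (Suc l) m A' c')"
proof (rule card_inj_on_le[of "\<lambda>\<tau>. \<tau>(l := \<lambda>_. False)"])
  show "inj_on (\<lambda>\<tau>. \<tau>(l := \<lambda>_. False)) {\<tau> \<in> realized_configs n L W b l d A c. \<tau> l = \<sigma>}"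
  proof (rule inj_onI)
    fix \<tau>1 \<tau>2
    assume mem: "\<tau>1 \<in> {\<tau> \<in> realized_configs n L W b l d A c. \<tau> l = \<sigma>}"
      "\<tau>2 \<in> {\<tau> \<in> realized_configs n L W b l d A c. \<tau> l = \<sigma>}"
      and eq: "\<tau>1(l := \<lambda>_. False) = \<tau>2(l := \<lambda>_. False)"
    have "\<tau>1 k = \<tau>2 k" for k
    proof (cases "k = l")
      case True
      with mem show ?thesis by simp
    next
      case False
      with fun_cong[OF eq, of k] show ?thesis by simp
    qed
    then show "\<tau>1 = \<tau>2" ..
  qed
  show "(\<lambda>\<tau>. \<tau>(l := \<lambda>_. False)) ` {\<tau> \<in> realized_configs n L W b l d A c. \<tau> l = \<sigma>}
    \<subseteq> realized_configs n L W b (Suc l) m A' c'"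
  proof clarify
    fix \<tau> assume \<tau>: "\<tau> \<in> realized_configs n L W b l d A c" "\<sigma> = \<tau> l"
    then obtain x where x: "x \<in> config_set n L W b l d A c \<tau>" unfolding realized_configs_def by blast
    obtain y where "y \<in> Rd m" "cell_output n W b l d A c \<sigma> x = inmap n (Suc l) m A' c' y"
      using factors by blast
    moreover have "layer n W b l (inmap n l d A c x) = cell_output n W b l d A c \<sigma> x"
      using layer_eq_cell_output[OF _ x] assms(1) \<tau>(2) by simp
    ultimately have "y \<in> config_set n L W b (Suc l) m A' c' (\<tau>(l := \<lambda>_. False))"
      using x assms(1) by (intro config_set_shift) auto
    moreover have "\<tau>(l := \<lambda>_. False) \<in> normal_configs n L (Suc l)"
      using \<tau>(1) unfolding realized_configs_def by (intro fun_upd_in_normal_configs_Suc) blast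
    ultimately show "\<tau>(l := \<lambda>_. False) \<in> realized_configs n L W b (Suc l) m A' c'"
      unfolding realized_configs_def by blast
  qed
qed (rule finite_realized_configs)

lemma card_realized_configs_le_sum_cells:
  assumes "l < L" "mat_rank (W l) (n l) (n (l - 1)) \<le> k"
    and bound: "\<And>m A' c'. real (card (realized_configs n L W b (Suc l) m A' c')) \<le> B m"
  shows "real (card (realized_configs n L W b l d A c))
    \<le> (\<Sum>\<sigma>\<in>cell_patterns n W b l d A c. B (min (card {i. \<sigma> i}) (min d k)))"
proof -
  let ?F = "cell_patterns n W b l d A c"
  let ?fiber = "\<lambda>\<sigma>. {\<tau> \<in> realized_configs n L W b l d A c. \<tau> l = \<sigma>}"
  have partition: "realized_configs n L W b l d A c = (\<Union>\<sigma>\<in>?F. ?fiber \<sigma>)"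
    using realized_config_in_cell_patterns[of l L] assms(1) by auto
  have "card (realized_configs n L W b l d A c) \<le> (\<Sum>\<sigma>\<in>?F. card (?fiber \<sigma>))"
    using card_UN_le[OF finite_cell_patterns[of n W b l d A c], of ?fiber] by (simp only: flip: partition)
  then have "real (card (realized_configs n L W b l d A c)) \<le> (\<Sum>\<sigma>\<in>?F. real (card (?fiber \<sigma>)))"
    by (simp flip: of_nat_sum)
  also have "\<dots> \<le> (\<Sum>\<sigma>\<in>?F. B (min (card {i. \<sigma> i}) (min d k)))"
  proof (rule sum_mono)
    fix \<sigma> assume "\<sigma> \<in> ?F"
    then have "finite {i. \<sigma> i}"
      using finite_subset[of "{i. \<sigma> i}" "{..<n l}"] unfolding cell_patterns_def by auto
    with assms(2) have "factors_affinely n (Suc l) (min (card {i. \<sigma> i}) (min d k)) (cell_output n W b l d A c \<sigma>)"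
      by (rule cell_output_factors)
    then obtain A' c' where
      "\<forall>x. \<exists>y\<in>Rd (min (card {i. \<sigma> i}) (min d k)).
         cell_output n W b l d A c \<sigma> x = inmap n (Suc l) (min (card {i. \<sigma> i}) (min d k)) A' c' y"
      unfolding factors_affinely_def by blast
    from card_realized_configs_fiber_le[OF assms(1) this[rule_format]]
    show "real (card (?fiber \<sigma>)) \<le> B (min (card {i. \<sigma> i}) (min d k))"
      using bound[of "min (card {i. \<sigma> i}) (min d k)" A' c'] by linarith
  qed
  finally show ?thesis .
qed

section \<open>Maximum number of regions\<close>

lemma max_regions_eq_Sup:
  "max_regions n L pat l0 d =
     Sup {real (card (realized_configs n L W b l0 d A c)) | W b A c. supported n L l0 pat W}"
  unfolding max_regions_def card_lin_regions ..

lemma supported_indicator_weights: "supported n L l0 pat (\<lambda>m i j. if (i, j) \<in> pat m then 1 else 0)"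
  unfolding supported_def by auto

lemma card_le_max_regions:
  assumes "supported n L l0 pat W"
  shows "real (card (realized_configs n L W b l0 d A c)) \<le> max_regions n L pat l0 d"
  unfolding max_regions_eq_Sup
proof (rule cSup_upper)
  show "bdd_above {real (card (realized_configs n L W b l0 d A c)) | W b A c. supported n L l0 pat W}"
    using card_mono[OF finite_normal_configs, of "realized_configs n L _ _ l0 d _ _" n L l0]
    by (intro bdd_aboveI[of _ "real (card (normal_configs n L l0))"]) (auto simp: realized_configs_def)
qed (use assms in blast)

lemma max_regions_le:
  assumes "\<And>W b A c. supported n L l0 pat W \<Longrightarrow> real (card (realized_configs n L W b l0 d A c)) \<le> B"
  shows "max_regions n L pat l0 d \<le> B"
  unfolding max_regions_eq_Sup
proof (rule cSup_least)
  show "{real (card (realized_configs n L W b l0 d A c)) | W b A c. supported n L l0 pat W} \<noteq> {}"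
    using supported_indicator_weights by blast
qed (use assms in blast)

lemma max_regions_nonneg: "0 \<le> max_regions n L pat l0 d"
  using card_le_max_regions[OF supported_indicator_weights] of_nat_0_le_iff order_trans by blast

lemma config_set_mono_dim:
  assumes "d \<le> d'"
  shows "config_set n L W b l0 d A c \<tau> \<subseteq> config_set n L W b l0 d' A c \<tau>"
proof
  fix x assume x: "x \<in> config_set n L W b l0 d A c \<tau>"
  then have "x \<in> Rd d" unfolding config_set_def by blast
  have sums: "(\<Sum>j<d'. A i j * x j) = (\<Sum>j<d. A i j * x j)" for i
    using \<open>x \<in> Rd d\<close> assms unfolding Rd_def by (intro sum.mono_neutral_right) auto
  have "inmap n l0 d' A c x = inmap n l0 d A c x" unfolding inmap_def sums ..
  moreover have "x \<in> Rd d'" using \<open>x \<in> Rd d\<close> assms unfolding Rd_def by auto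
  ultimately show "x \<in> config_set n L W b l0 d' A c \<tau>" using x unfolding config_set_def by simp
qed

lemma max_regions_mono_dim:
  assumes "d \<le> d'"
  shows "max_regions n L pat l0 d \<le> max_regions n L pat l0 d'"
proof (rule max_regions_le)
  fix W b A c assume "supported n L l0 pat W"
  moreover have "realized_configs n L W b l0 d A c \<subseteq> realized_configs n L W b l0 d' A c"
    using config_set_mono_dim[OF assms, of n L W b l0 A c] unfolding realized_configs_def by blast
  then have "card (realized_configs n L W b l0 d A c) \<le> card (realized_configs n L W b l0 d' A c)"
    by (intro card_mono[OF finite_realized_configs])
  ultimately show "real (card (realized_configs n L W b l0 d A c)) \<le> max_regions n L pat l0 d'"
    using card_le_max_regions[of n L l0 pat W b d' A c] by (meson of_nat_le_iff order_trans)
qed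

lemma supported_Suc: "supported n L l0 pat W \<Longrightarrow> supported n L (Suc l0) pat W"
  unfolding supported_def by auto

lemma mat_rank_le_pattern_rank_if_supported:
  assumes "supported n L l0 pat W" "l \<in> {l0..L}"
  shows "mat_rank (W l) (n l) (n (l - 1)) \<le> pattern_rank (n l) (n (l - 1)) (pat l)"
  using assms unfolding supported_def by (intro mat_rank_le_pattern_rank) blast

lemma max_regions_last_le:
  "max_regions n L pat L d \<le> (\<Sum>j = 0..min (pattern_rank (n L) (n (L - 1)) (pat L)) d. real (n L choose j))"
proof (rule max_regions_le)
  fix W b A c assume "supported n L L pat W"
  then have "mat_rank (W L) (n L) (n (L - 1)) \<le> pattern_rank (n L) (n (L - 1)) (pat L)"
    by (rule mat_rank_le_pattern_rank_if_supported) simp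
  from card_cell_patterns_le[where n = n and W = W and l = L and b = b and d = d and A = A and c = c, OF this]
    card_realized_configs_last[of n L W b d A c]
  show "real (card (realized_configs n L W b L d A c))
      \<le> (\<Sum>j = 0..min (pattern_rank (n L) (n (L - 1)) (pat L)) d. real (n L choose j))"
    by (simp flip: of_nat_sum)
qed

lemma card_inactive_level_le:
  assumes "\<forall>\<sigma>\<in>F. \<forall>i. \<sigma> i \<longrightarrow> i < N"
  shows "card {\<sigma>\<in>F. card {i. i < N \<and> \<not> \<sigma> i} = j} \<le> N choose j"
proof -
  let ?inactive = "\<lambda>\<sigma>::nat \<Rightarrow> bool. {i. i < N \<and> \<not> \<sigma> i}"
  have "inj_on ?inactive F"
  proof (rule inj_onI)
    fix \<sigma>1 \<sigma>2 assume "\<sigma>1 \<in> F" "\<sigma>2 \<in> F" "?inactive \<sigma>1 = ?inactive \<sigma>2"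
    with assms have "\<sigma>1 i = \<sigma>2 i" for i by (cases "i < N") (auto simp: set_eq_iff)
    then show "\<sigma>1 = \<sigma>2" ..
  qed
  then have "card {\<sigma>\<in>F. card (?inactive \<sigma>) = j} \<le> card {B. B \<subseteq> {..<N} \<and> card B = j}"
    by (intro card_inj_on_le[of ?inactive]) (auto intro: inj_on_subset)
  also have "\<dots> = N choose j" by (simp add: n_subsets)
  finally show ?thesis .
qed

text \<open>A cell of layer l with j inactive neurons passes an input of dimension at most
  min (n l - j) (min d k) to the remaining layers.\<close>
lemma max_regions_step_le:
  assumes "l < L"
  shows "max_regions n L pat l d \<le>
    (\<Sum>j = 0..min (pattern_rank (n l) (n (l - 1)) (pat l)) d. real (n l choose j) *
        max_regions n L pat (Suc l) (min (n l - j) (min d (pattern_rank (n l) (n (l - 1)) (pat l)))))"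
proof (rule max_regions_le)
  fix W b A c assume supp: "supported n L l pat W"
  define k where "k = pattern_rank (n l) (n (l - 1)) (pat l)"
  define h where "h = (\<lambda>j. max_regions n L pat (Suc l) (min (n l - j) (min d k)))"
  let ?F = "cell_patterns n W b l d A c"
  let ?inactive = "\<lambda>\<sigma>::nat \<Rightarrow> bool. card {i. i < n l \<and> \<not> \<sigma> i}"
  have rank: "mat_rank (W l) (n l) (n (l - 1)) \<le> k"
    unfolding k_def using supp assms by (intro mat_rank_le_pattern_rank_if_supported) auto
  have active: "card {i. \<sigma> i} = n l - ?inactive \<sigma>" if "\<sigma> \<in> ?F" for \<sigma>
  proof -
    have sub: "{i. \<sigma> i} \<subseteq> {..<n l}" and "{i. i < n l \<and> \<not> \<sigma> i} = {..<n l} - {i. \<sigma> i}"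
      using that unfolding cell_patterns_def by auto
    moreover have "card {i. \<sigma> i} \<le> n l" using card_mono[OF _ sub] by simp
    ultimately show ?thesis by (simp add: card_Diff_subset finite_subset)
  qed
  have "real (card (realized_configs n L W b l d A c))
      \<le> (\<Sum>\<sigma>\<in>?F. max_regions n L pat (Suc l) (min (card {i. \<sigma> i}) (min d k)))"
    using assms rank card_le_max_regions[OF supported_Suc[OF supp]]
    by (rule card_realized_configs_le_sum_cells)
  also have "\<dots> = (\<Sum>\<sigma>\<in>?F. h (?inactive \<sigma>))"
    unfolding h_def using active by (intro sum.cong) auto
  also have "\<dots> \<le> (\<Sum>j = 0..min k d. real (n l choose j) * h j)"
  proof (rule sum_antimono_levels_le[OF finite_cell_patterns])
    show "card {\<sigma>\<in>?F. ?inactive \<sigma> = j} \<le> n l choose j" for j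
      by (rule card_inactive_level_le) (auto simp: cell_patterns_def)
    show "card ?F \<le> (\<Sum>j = 0..min k d. n l choose j)"
      by (rule card_cell_patterns_le[where n = n and W = W and l = l, OF rank])
    show "h j \<le> h i" if "i \<le> j" for i j
      unfolding h_def using that by (intro max_regions_mono_dim) auto
    show "0 \<le> h (min k d)" unfolding h_def by (rule max_regions_nonneg)
  qed
  finally show "real (card (realized_configs n L W b l d A c))
    \<le> (\<Sum>j = 0..min (pattern_rank (n l) (n (l - 1)) (pat l)) d. real (n l choose j) *
        max_regions n L pat (Suc l) (min (n l - j) (min d (pattern_rank (n l) (n (l - 1)) (pat l)))))"
    unfolding h_def k_def .
qed

section \<open>Expected number of regions\<close>

lemma pat_prob_nonneg: "0 \<le> S \<Longrightarrow> S \<le> 1 \<Longrightarrow> 0 \<le> pat_prob R C S P"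
  unfolding pat_prob_def by simp

lemma sum_pat_prob_by_rank:
  "(\<Sum>P\<in>Pow (box R C). pat_prob R C S P * f (pattern_rank R C P))
     = (\<Sum>k = 0..R. prob_rank k R C S * f k)"
proof -
  have "(\<Sum>k = 0..R. prob_rank k R C S * f k)
     = (\<Sum>k = 0..R. \<Sum>P\<in>{P \<in> Pow (box R C). pattern_rank R C P = k}. pat_prob R C S P * f (pattern_rank R C P))"
    unfolding prob_rank_def sum_distrib_right by (intro sum.cong) auto
  also have "\<dots> = (\<Sum>P\<in>Pow (box R C). pat_prob R C S P * f (pattern_rank R C P))"
    by (rule sum.group) (auto simp: box_def pattern_rank_le_rows)
  finally show ?thesis by simp
qed

lemma sum_pat_space_last:
  "(\<Sum>pat\<in>pat_space n L L. f pat) = (\<Sum>P\<in>Pow (box (n L) (n (L - 1))). f (\<lambda>m. if m = L then P else {}))"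
proof -
  have "pat_space n L L = (\<lambda>P m. if m = L then P else {}) ` Pow (box (n L) (n (L - 1)))"
  proof (intro equalityI subsetI)
    fix pat assume "pat \<in> pat_space n L L"
    then have "pat = (\<lambda>m. if m = L then pat L else {})" "pat L \<in> Pow (box (n L) (n (L - 1)))"
      unfolding pat_space_def by (auto simp: fun_eq_iff)
    then show "pat \<in> (\<lambda>P m. if m = L then P else {}) ` Pow (box (n L) (n (L - 1)))" by blast
  qed (auto simp: pat_space_def)
  moreover have "inj_on (\<lambda>P m. if m = L then P else {}) (Pow (box (n L) (n (L - 1))))"
    by (rule inj_onI) (metis (full_types))
  ultimately show ?thesis by (simp add: sum.reindex)
qed

lemma sum_pat_space_Suc:
  assumes "l < L"
  shows "(\<Sum>pat\<in>pat_space n L l. f pat)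
    = (\<Sum>P\<in>Pow (box (n l) (n (l - 1))). \<Sum>r\<in>pat_space n L (Suc l). f (r(l := P)))"
proof -
  let ?g = "\<lambda>(P, r). r(l := P)"
  have "pat_space n L l = ?g ` (Pow (box (n l) (n (l - 1))) \<times> pat_space n L (Suc l))"
  proof (intro equalityI subsetI)
    fix pat assume "pat \<in> pat_space n L l"
    with assms have "(pat l, pat(l := {})) \<in> Pow (box (n l) (n (l - 1))) \<times> pat_space n L (Suc l)"
      unfolding pat_space_def by auto
    then show "pat \<in> ?g ` (Pow (box (n l) (n (l - 1))) \<times> pat_space n L (Suc l))"
      by (intro image_eqI[of _ _ "(pat l, pat(l := {}))"]) auto
  next
    fix pat assume "pat \<in> ?g ` (Pow (box (n l) (n (l - 1))) \<times> pat_space n L (Suc l))"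
    then obtain P r where P: "P \<subseteq> box (n l) (n (l - 1))" and r: "r \<in> pat_space n L (Suc l)"
      and pat: "pat = r(l := P)" by auto
    have "r m \<subseteq> box (n m) (n (m - 1))" if "Suc l \<le> m" "m \<le> L" for m
      using r that unfolding pat_space_def by auto
    moreover have "r m = {}" if "m \<notin> {Suc l..L}" for m
      using r that unfolding pat_space_def by auto
    ultimately show "pat \<in> pat_space n L l"
      unfolding pat_space_def pat using P assms by (auto simp: Suc_le_eq le_less)
  qed
  moreover have "inj_on ?g (Pow (box (n l) (n (l - 1))) \<times> pat_space n L (Suc l))"
  proof (rule inj_onI, clarify)
    fix P r P' r'
    assume "r \<in> pat_space n L (Suc l)" "r' \<in> pat_space n L (Suc l)" and eq: "r(l := P) = r'(l := P')"
    then have "r l = {}" "r' l = {}" unfolding pat_space_def by auto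
    with eq show "P = P' \<and> r = r'" by (metis fun_upd_eqD fun_upd_triv fun_upd_upd)
  qed
  ultimately show ?thesis by (simp add: sum.reindex sum.cartesian_product split_def)
qed

lemma max_regions_fun_upd_below:
  "max_regions n L (pat(l := P)) (Suc l) d = max_regions n L pat (Suc l) d"
  unfolding max_regions_def supported_def by auto

lemma Rexp_last_le:
  assumes "0 \<le> p L" "p L \<le> 1"
  shows "Rexp n L p L d \<le> (\<Sum>k = 0..n L. prob_rank k (n L) (n (L - 1)) (p L) *
              (\<Sum>j = 0..min k d. real (n L choose j)))"
proof -
  let ?pp = "pat_prob (n L) (n (L - 1)) (p L)"
  let ?rk = "pattern_rank (n L) (n (L - 1))"
  have "Rexp n L p L d = (\<Sum>P\<in>Pow (box (n L) (n (L - 1))).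
      ?pp P * max_regions n L (\<lambda>m. if m = L then P else {}) L d)"
    unfolding Rexp_def sum_pat_space_last by simp
  also have "\<dots> \<le> (\<Sum>P\<in>Pow (box (n L) (n (L - 1))). ?pp P * (\<Sum>j = 0..min (?rk P) d. real (n L choose j)))"
  proof (intro sum_mono mult_left_mono)
    fix P
    show "max_regions n L (\<lambda>m. if m = L then P else {}) L d \<le> (\<Sum>j = 0..min (?rk P) d. real (n L choose j))"
      using max_regions_last_le[of n L "\<lambda>m. if m = L then P else {}" d] by simp
  qed (rule pat_prob_nonneg[OF assms])
  also have "\<dots> = (\<Sum>k = 0..n L. prob_rank k (n L) (n (L - 1)) (p L) * (\<Sum>j = 0..min k d. real (n L choose j)))"
    by (rule sum_pat_prob_by_rank)
  finally show ?thesis .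
qed

lemma Rexp_split_layer:
  assumes "l < L"
  shows "Rexp n L p l d = (\<Sum>P\<in>Pow (box (n l) (n (l - 1))). \<Sum>r\<in>pat_space n L (Suc l).
      pat_prob (n l) (n (l - 1)) (p l) P * (\<Prod>m\<in>{Suc l..L}. pat_prob (n m) (n (m - 1)) (p m) (r m))
        * max_regions n L (r(l := P)) l d)"
proof -
  let ?pp = "\<lambda>m. pat_prob (n m) (n (m - 1)) (p m)"
  have "(\<Prod>m\<in>{l..L}. ?pp m ((r(l := P)) m)) = ?pp l P * (\<Prod>m\<in>{Suc l..L}. ?pp m (r m))" for r P
  proof -
    have "{l..L} = insert l {Suc l..L}" using assms by auto
    then show ?thesis by (simp add: prod.cong[of "{Suc l..L}" _ "\<lambda>m. ?pp m ((r(l := P)) m)"])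
  qed
  then show ?thesis unfolding Rexp_def sum_pat_space_Suc[OF assms] by simp
qed

lemma Rexp_step_le:
  assumes "1 \<le> l" "l < L" and p: "\<And>m. 1 \<le> m \<Longrightarrow> m \<le> L \<Longrightarrow> 0 \<le> p m \<and> p m \<le> 1"
  shows "Rexp n L p l d \<le>
           (\<Sum>k = 0..n l. prob_rank k (n l) (n (l - 1)) (p l) *
              (\<Sum>j = 0..min k d. real (n l choose j) *
                 Rexp n L p (l + 1) (min (n l - j) (min d k))))"
proof -
  let ?pp = "\<lambda>m. pat_prob (n m) (n (m - 1)) (p m)"
  let ?w = "\<lambda>r. \<Prod>m\<in>{Suc l..L}. ?pp m (r m)"
  let ?rk = "pattern_rank (n l) (n (l - 1))"
  let ?mr = "\<lambda>r P j. max_regions n L r (Suc l) (min (n l - j) (min d (?rk P)))"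
  have w_nonneg: "0 \<le> ?w r" for r
    using p assms(1) by (intro prod_nonneg) (auto intro!: pat_prob_nonneg)
  have pp_nonneg: "0 \<le> ?pp l P" for P
    using p assms by (intro pat_prob_nonneg) auto
  have "Rexp n L p l d = (\<Sum>P\<in>Pow (box (n l) (n (l - 1))). \<Sum>r\<in>pat_space n L (Suc l).
      ?pp l P * ?w r * max_regions n L (r(l := P)) l d)"
    by (rule Rexp_split_layer[OF assms(2)])
  also have "\<dots> \<le> (\<Sum>P\<in>Pow (box (n l) (n (l - 1))). \<Sum>r\<in>pat_space n L (Suc l).
      ?pp l P * ?w r * (\<Sum>j = 0..min (?rk P) d. real (n l choose j) * ?mr r P j))"
    using max_regions_step_le[OF assms(2), of n "r(l := P)" d for r P] pp_nonneg w_nonneg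
    by (intro sum_mono mult_left_mono) (auto simp: max_regions_fun_upd_below)
  also have "\<dots> = (\<Sum>P\<in>Pow (box (n l) (n (l - 1))). ?pp l P *
      (\<Sum>j = 0..min (?rk P) d. real (n l choose j) * (\<Sum>r\<in>pat_space n L (Suc l). ?w r * ?mr r P j)))"
    by (simp add: sum_distrib_left sum_distrib_right mult_ac sum.swap[of _ "pat_space n L (Suc l)"])
  also have "\<dots> = (\<Sum>P\<in>Pow (box (n l) (n (l - 1))). ?pp l P *
      (\<Sum>j = 0..min (?rk P) d. real (n l choose j) * Rexp n L p (l + 1) (min (n l - j) (min d (?rk P)))))"
    unfolding Rexp_def by simp
  also have "\<dots> = (\<Sum>k = 0..n l. prob_rank k (n l) (n (l - 1)) (p l) *
      (\<Sum>j = 0..min k d. real (n l choose j) * Rexp n L p (l + 1) (min (n l - j) (min d k))))"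
    by (rule sum_pat_prob_by_rank)
  finally show ?thesis .
qed

theorem theorem1:
  fixes L :: nat and n :: "nat \<Rightarrow> nat" and p :: "nat \<Rightarrow> real"
  assumes "L \<ge> 1"
    and "\<And>l. 1 \<le> l \<Longrightarrow> l \<le> L \<Longrightarrow> 0 \<le> p l \<and> p l \<le> 1"
  shows "\<forall>d. Rexp n L p L d \<le>
           (\<Sum>k = 0..n L. prob_rank k (n L) (n (L - 1)) (p L) *
              (\<Sum>j = 0..min k d. real (n L choose j)))
       \<and> (\<forall>l d. 1 \<le> l \<and> l \<le> L - 1 \<longrightarrow>
           Rexp n L p l d \<le>
           (\<Sum>k = 0..n l. prob_rank k (n l) (n (l - 1)) (p l) *
              (\<Sum>j = 0..min k d. real (n l choose j) *
                 Rexp n L p (l + 1) (min (n l - j) (min d k)))))"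
proof (intro conjI allI impI)
  fix d
  from assms show "Rexp n L p L d \<le> (\<Sum>k = 0..n L. prob_rank k (n L) (n (L - 1)) (p L) *
      (\<Sum>j = 0..min k d. real (n L choose j)))"
    by (intro Rexp_last_le) auto
next
  fix l d assume "1 \<le> l \<and> l \<le> L - 1"
  with assms show "Rexp n L p l d \<le> (\<Sum>k = 0..n l. prob_rank k (n l) (n (l - 1)) (p l) *
      (\<Sum>j = 0..min k d. real (n l choose j) * Rexp n L p (l + 1) (min (n l - j) (min d k))))"
    by (intro Rexp_step_le) auto
qed

end
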